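(* Let $T$ be a spanning tree of $K_n$. For each edge $e$ of $T$, let $A_e$ be the event that $e$ is an edge of a spanning tree of $K_n$ drawn uniformly at random. Then the line graph $\mathcal{L}(T)$ is a negative dependency graph for the events $\{A_e\}_{e \in T}$.
   Context: Given events $A_1,\dots,A_N$, a negative dependency graph is a simple graph $G=([N],E)$ such that for all $i\in[N]$ and all $S\subseteq\{j\in[N] : \{i,j\}\notin E\}$, if $\Pr[\bigwedge_{j\in S}\bar A_j]\neq 0$ then $\Pr[A_i \mid \bigwedge_{j\in S}\bar A_j]\le \Pr[A_i]$ (here the events are indexed by the edges of $T$). The line graph $\mathcal{L}(T)$ has vertex set the edges of $T$, two edges adjacent if they share an endpoint. *)

theory Defs
  imports "HOL-Probability.Probability"
begin

(* Graphs on vertex set {0..<n}; an edge is a 2-element set of vertices. *)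

definition complete_graph_edges :: "nat \<Rightarrow> nat set set" where
  "complete_graph_edges n = {e. \<exists>u v. u < n \<and> v < n \<and> u \<noteq> v \<and> e = {u, v}}"

definition adj :: "nat set set \<Rightarrow> nat \<Rightarrow> nat \<Rightarrow> bool" where
  "adj F u v \<longleftrightarrow> u \<noteq> v \<and> {u, v} \<in> F"

definition is_cycle :: "nat set set \<Rightarrow> nat list \<Rightarrow> bool" where
  "is_cycle F vs \<longleftrightarrow> length vs \<ge> 3 \<and> distinct vs
     \<and> (\<forall>i. Suc i < length vs \<longrightarrow> adj F (vs ! i) (vs ! Suc i))
     \<and> adj F (last vs) (hd vs)"

definition acyclic_edges :: "nat set set \<Rightarrow> bool" where
  "acyclic_edges F \<longleftrightarrow> \<not> (\<exists>vs. is_cycle F vs)"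

definition connected_on :: "nat set \<Rightarrow> nat set set \<Rightarrow> bool" where
  "connected_on V F \<longleftrightarrow> (\<forall>u\<in>V. \<forall>v\<in>V. (adj F)\<^sup>*\<^sup>* u v)"

definition spanning_tree :: "nat \<Rightarrow> nat set set \<Rightarrow> bool" where
  "spanning_tree n T \<longleftrightarrow> T \<subseteq> complete_graph_edges n
     \<and> connected_on {0..<n} T \<and> acyclic_edges T"

definition spanning_trees :: "nat \<Rightarrow> nat set set set" where
  "spanning_trees n = {T. spanning_tree n T}"

definition UST :: "nat \<Rightarrow> nat set set pmf" where
  "UST n = pmf_of_set (spanning_trees n)"

definition line_graph :: "nat set set \<Rightarrow> nat set \<Rightarrow> nat set \<Rightarrow> bool" where
  "line_graph T e f \<longleftrightarrow> e \<in> T \<and> f \<in> T \<and> e \<noteq> f \<and> e \<inter> f \<noteq> {}"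

definition neg_dep_graph ::
    "'a measure \<Rightarrow> 'i set \<Rightarrow> ('i \<Rightarrow> 'a set) \<Rightarrow> ('i \<Rightarrow> 'i \<Rightarrow> bool) \<Rightarrow> bool" where
  "neg_dep_graph M I A G \<longleftrightarrow>
     (\<forall>i\<in>I. \<not> G i i) \<and> (\<forall>i\<in>I. \<forall>j\<in>I. G i j \<longleftrightarrow> G j i) \<and>
     (\<forall>i\<in>I. \<forall>S. S \<subseteq> {j\<in>I. \<not> G i j} \<longrightarrow>
        (let B = space M \<inter> (\<Inter>j\<in>S. space M - A j) in
           measure M B \<noteq> 0 \<longrightarrow> measure M (A i \<inter> B) / measure M B \<le> measure M (A i)))"

end

theory Submission
  imports Defs
begin

(* Fix an edge ab of T and a set S of edges of T meeting neither a nor b, and let R be the set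
   of spanning trees of K_n avoiding S. Count the pairs (T', x) with ab in T' in R and x not in
   {a, b}: deleting ab splits T' into an a-side and a b-side, and exchanging ab for xb (x on the
   a-side) or for xa (x on the b-side) is a bijection onto the trees in R without ab; these stay
   in R because the new edge meets ab. Hence (n - 2) |{T' in R. ab in T'}| = 2 |{T' in R. ab
   not in T'}|, i.e. Pr[ab in T' | T' avoids S] = 2/n for every such S, in particular for the
   empty one, so the defining inequality holds with equality. *)

lemma adj_commute: "adj F u v = adj F v u"
  by (auto simp: adj_def insert_commute)

lemma adj_mono: "F \<subseteq> G \<Longrightarrow> adj F u v \<Longrightarrow> adj G u v"
  by (auto simp: adj_def)

lemma reachable_sym: "(adj F)\<^sup>*\<^sup>* u v \<Longrightarrow> (adj F)\<^sup>*\<^sup>* v u"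
  by (metis adj_commute sympI symp_rtranclp sympD)

lemma reachable_mono: "F \<subseteq> G \<Longrightarrow> (adj F)\<^sup>*\<^sup>* u v \<Longrightarrow> (adj G)\<^sup>*\<^sup>* u v"
  by (metis adj_mono mono_rtranclp)

lemma reachable_insert_edge:
  assumes "(adj (insert {p,q} F))\<^sup>*\<^sup>* u v"
  shows "(adj F)\<^sup>*\<^sup>* u v \<or> ((adj F)\<^sup>*\<^sup>* u p \<and> (adj F)\<^sup>*\<^sup>* q v)
    \<or> ((adj F)\<^sup>*\<^sup>* u q \<and> (adj F)\<^sup>*\<^sup>* p v)"
  using assms
proof (induction rule: rtranclp_induct)
  case base
  then show ?case by simp
next
  case (step y z)
  show ?case
  proof (cases "{y,z} \<in> F")
    case True
    then have "adj F y z" using step(2) by (auto simp: adj_def)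
    then show ?thesis using step(3) by (meson rtranclp.rtrancl_into_rtrancl)
  next
    case False
    then have "(y = p \<and> z = q) \<or> (y = q \<and> z = p)"
      using step(2) by (auto simp: adj_def doubleton_eq_iff)
    then show ?thesis using step(3) by auto
  qed
qed

definition walk :: "nat set set \<Rightarrow> nat list \<Rightarrow> bool" where
  "walk F vs \<longleftrightarrow> (\<forall>i. Suc i < length vs \<longrightarrow> adj F (vs ! i) (vs ! Suc i))"

lemma reachable_imp_distinct_walk:
  assumes "(adj F)\<^sup>*\<^sup>* u v"
  obtains vs where "vs \<noteq> []" "hd vs = u" "last vs = v" "distinct vs" "walk F vs"
  using assms
proof (induction arbitrary: thesis rule: rtranclp_induct)
  case base
  show ?case by (rule base.prems[of "[u]"]) (auto simp: walk_def)
next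
  case (step y z)
  then obtain vs where vs: "vs \<noteq> []" "hd vs = u" "last vs = y" "distinct vs" "walk F vs"
    by blast
  show ?case
  proof (cases "z \<in> set vs")
    case True
    then obtain k where k: "k < length vs" "vs ! k = z" by (auto simp: in_set_conv_nth)
    let ?ws = "take (Suc k) vs"
    have "hd ?ws = u" using vs(1,2) by (simp add: hd_take)
    moreover have "last ?ws = z" using k by (simp add: take_Suc_conv_app_nth)
    moreover have "walk F ?ws" using vs(5) k(1) by (auto simp: walk_def)
    ultimately show ?thesis using vs(1,4) by (intro step.prems) auto
  next
    case False
    have "walk F (vs @ [z])"
      unfolding walk_def
    proof (intro allI impI)
      fix i assume i: "Suc i < length (vs @ [z])"
      show "adj F ((vs @ [z]) ! i) ((vs @ [z]) ! Suc i)"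
      proof (cases "Suc i < length vs")
        case True
        then show ?thesis using vs(5) by (simp add: walk_def nth_append)
      next
        case False
        then have "i = length vs - 1" using i by simp
        then have "(vs @ [z]) ! i = y" "(vs @ [z]) ! Suc i = z"
          using vs(1,3) False by (auto simp: nth_append last_conv_nth)
        then show ?thesis using step(2) by simp
      qed
    qed
    then show ?thesis using vs False by (intro step.prems[of "vs @ [z]"]) auto
  qed
qed

lemma walk_segment_reachable:
  assumes "\<forall>m. i \<le> m \<and> m < j \<longrightarrow> adj F (vs ! m) (vs ! Suc m)" "i \<le> j"
  shows "(adj F)\<^sup>*\<^sup>* (vs ! i) (vs ! j)"
  using assms
proof (induction j)
  case 0
  then show ?case by simp
next
  case (Suc j)
  then show ?case
    by (cases "i = Suc j") (auto intro: rtranclp.rtrancl_into_rtrancl)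
qed

lemma distinct_consecutive_doubleton_eq:
  assumes "distinct vs" "Suc m < length vs" "Suc k < length vs"
    "{vs ! m, vs ! Suc m} = {vs ! k, vs ! Suc k}"
  shows "m = k"
  using assms by (auto simp: doubleton_eq_iff nth_eq_iff_index_eq)

lemma distinct_consecutive_doubleton_ne_last_hd:
  assumes "distinct vs" "Suc m < length vs" "length vs \<ge> 3"
  shows "{vs ! m, vs ! Suc m} \<noteq> {last vs, hd vs}"
proof -
  have "vs \<noteq> []" using assms(3) by auto
  then have "last vs = vs ! (length vs - 1)" "hd vs = vs ! 0"
    by (auto simp: last_conv_nth hd_conv_nth)
  moreover have "length vs - 1 < length vs" "0 < length vs" "m < length vs"
    using assms by auto
  ultimately show ?thesis
    using assms by (auto simp: doubleton_eq_iff nth_eq_iff_index_eq)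
qed

lemma acyclic_edges_mono: "F \<subseteq> G \<Longrightarrow> acyclic_edges G \<Longrightarrow> acyclic_edges F"
  unfolding acyclic_edges_def is_cycle_def by (meson adj_mono)

lemma acyclic_not_reachable_without_edge:
  assumes "acyclic_edges F" "{u,v} \<in> F" "u \<noteq> v"
  shows "\<not> (adj (F - {{u,v}}))\<^sup>*\<^sup>* u v"
proof
  assume "(adj (F - {{u,v}}))\<^sup>*\<^sup>* u v"
  then obtain vs where vs: "vs \<noteq> []" "hd vs = u" "last vs = v" "distinct vs"
    and walk: "walk (F - {{u,v}}) vs"
    by (rule reachable_imp_distinct_walk)
  have h0: "vs ! 0 = u" and hl: "vs ! (length vs - 1) = v"
    using vs by (auto simp: hd_conv_nth last_conv_nth)
  have "length vs \<noteq> 1" using h0 hl assms(3) by auto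
  moreover have "length vs \<noteq> 2"
  proof
    assume "length vs = 2"
    then have "adj (F - {{u,v}}) u v" using walk h0 hl by (auto simp: walk_def)
    then show False by (auto simp: adj_def)
  qed
  ultimately have "length vs \<ge> 3" using vs(1) by (cases "length vs") auto
  moreover have "walk F vs" using walk by (auto simp: walk_def intro: adj_mono)
  moreover have "adj F (last vs) (hd vs)" using vs assms by (auto simp: adj_def insert_commute)
  ultimately have "is_cycle F vs" using vs(4) by (auto simp: is_cycle_def walk_def)
  then show False using assms(1) by (auto simp: acyclic_edges_def)
qed

lemma is_cycle_edge_reachable_without:
  assumes cyc: "is_cycle G vs" and k: "Suc k < length vs"
  shows "(adj (G - {{vs ! k, vs ! Suc k}}))\<^sup>*\<^sup>* (vs ! Suc k) (vs ! k)"
proof -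
  let ?L = "length vs"
  let ?H = "G - {{vs ! k, vs ! Suc k}}"
  have L3: "?L \<ge> 3" and dist: "distinct vs"
    and step: "\<And>i. Suc i < ?L \<Longrightarrow> adj G (vs ! i) (vs ! Suc i)"
    and close: "adj G (last vs) (hd vs)"
    using cyc by (auto simp: is_cycle_def)
  have "vs \<noteq> []" using L3 by auto
  then have hd_last: "hd vs = vs ! 0" "last vs = vs ! (?L - 1)"
    by (auto simp: hd_conv_nth last_conv_nth)
  have other: "adj ?H (vs ! m) (vs ! Suc m)" if "Suc m < ?L" "m \<noteq> k" for m
    using step[OF that(1)] distinct_consecutive_doubleton_eq[OF dist that(1) k] that(2)
    by (auto simp: adj_def)
  have "adj ?H (last vs) (hd vs)"
    using close distinct_consecutive_doubleton_ne_last_hd[OF dist k L3]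
    by (auto simp: adj_def insert_commute)
  moreover have "(adj ?H)\<^sup>*\<^sup>* (vs ! 0) (vs ! k)"
    by (rule walk_segment_reachable) (use other k in auto)
  moreover have "(adj ?H)\<^sup>*\<^sup>* (vs ! Suc k) (vs ! (?L - 1))"
    by (rule walk_segment_reachable) (use other k in auto)
  ultimately show ?thesis
    using hd_last by (metis converse_rtranclp_into_rtranclp rtranclp_trans)
qed

lemma acyclic_insert_edge:
  assumes acyc: "acyclic_edges F" and sep: "\<not> (adj F)\<^sup>*\<^sup>* u v" and "u \<noteq> v"
  shows "acyclic_edges (insert {u,v} F)"
proof (rule ccontr)
  let ?G = "insert {u,v} F"
  assume "\<not> acyclic_edges ?G"
  then obtain vs where cyc: "is_cycle ?G vs" by (auto simp: acyclic_edges_def)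
  let ?L = "length vs"
  have not_uv: "{x,y} \<noteq> {u,v}" if "(adj F)\<^sup>*\<^sup>* x y" for x y
    using sep that reachable_sym by (auto simp: doubleton_eq_iff)
  have adjF: "adj F x y" if "adj ?G x y" "{x,y} \<noteq> {u,v}" for x y
    using that by (auto simp: adj_def)
  show False
  proof (cases "\<exists>k. Suc k < ?L \<and> {vs ! k, vs ! Suc k} = {u,v}")
    case True
    then obtain k where k: "Suc k < ?L" "{vs ! k, vs ! Suc k} = {u,v}" by blast
    then have "(adj F)\<^sup>*\<^sup>* (vs ! Suc k) (vs ! k)"
      using is_cycle_edge_reachable_without[OF cyc k(1)] reachable_mono[of "?G - {{u,v}}" F]
      by auto
    then show False using not_uv k(2) by (metis insert_commute)
  next
    case False
    then have all: "adj F (vs ! m) (vs ! Suc m)" if "Suc m < ?L" for m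
      using adjF cyc that by (auto simp: is_cycle_def)
    have "{last vs, hd vs} = {u,v}"
    proof (rule ccontr)
      assume "{last vs, hd vs} \<noteq> {u,v}"
      then have "is_cycle F vs" using cyc all adjF by (auto simp: is_cycle_def)
      then show False using acyc by (auto simp: acyclic_edges_def)
    qed
    moreover have "vs \<noteq> []" "?L \<ge> 3" using cyc by (auto simp: is_cycle_def)
    moreover have "(adj F)\<^sup>*\<^sup>* (vs ! 0) (vs ! (?L - 1))"
      by (rule walk_segment_reachable) (use all calculation in auto)
    ultimately show False using not_uv by (metis insert_commute hd_conv_nth last_conv_nth)
  qed
qed

lemma reachable_last_edge:
  assumes "(adj F)\<^sup>*\<^sup>* p q" "p \<noteq> q" "{p,q} \<notin> F"
  obtains x where "{x,q} \<in> F" "x \<noteq> p" "(adj (F - {{x,q}}))\<^sup>*\<^sup>* p x"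
proof -
  obtain vs where vs: "vs \<noteq> []" "hd vs = p" "last vs = q" "distinct vs" and walk: "walk F vs"
    using assms(1) by (rule reachable_imp_distinct_walk)
  let ?L = "length vs"
  have h0: "vs ! 0 = p" and hl: "vs ! (?L - 1) = q"
    using vs by (auto simp: hd_conv_nth last_conv_nth)
  have "?L \<noteq> 1" using h0 hl assms(2) by auto
  moreover have "?L \<noteq> 2"
  proof
    assume "?L = 2"
    then have "adj F p q" using walk h0 hl by (auto simp: walk_def)
    then show False using assms(3) by (auto simp: adj_def)
  qed
  ultimately have L3: "?L \<ge> 3" using vs(1) by (cases ?L) auto
  define x where "x = vs ! (?L - 2)"
  have last_step: "Suc (?L - 2) = ?L - 1" using L3 by simp
  moreover have "Suc (?L - 2) < ?L" using L3 by simp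
  ultimately have "adj F x q" using walk hl unfolding walk_def x_def by metis
  then have xq: "{x,q} \<in> F" by (simp add: adj_def)
  have "?L - 2 < ?L" "0 < ?L" "?L - 2 \<noteq> 0" using L3 by auto
  then have "x \<noteq> p" using nth_eq_iff_index_eq[OF vs(4)] h0 unfolding x_def by metis
  have "(adj (F - {{x,q}}))\<^sup>*\<^sup>* (vs ! 0) (vs ! (?L - 2))"
  proof (rule walk_segment_reachable)
    show "\<forall>m. 0 \<le> m \<and> m < ?L - 2 \<longrightarrow> adj (F - {{x,q}}) (vs ! m) (vs ! Suc m)"
    proof (intro allI impI)
      fix m assume m: "0 \<le> m \<and> m < ?L - 2"
      have "Suc m < ?L" "Suc (?L - 2) < ?L" using m L3 by auto
      then have "{vs ! m, vs ! Suc m} \<noteq> {vs ! (?L - 2), vs ! Suc (?L - 2)}"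
        using distinct_consecutive_doubleton_eq[OF vs(4)] m by fastforce
      then have "{vs ! m, vs ! Suc m} \<noteq> {x,q}" using last_step hl unfolding x_def by simp
      then show "adj (F - {{x,q}}) (vs ! m) (vs ! Suc m)"
        using walk m by (auto simp: walk_def adj_def)
    qed
  qed simp
  then show thesis using that xq \<open>x \<noteq> p\<close> h0 unfolding x_def by simp
qed

lemma doubleton_in_complete_graph_edges:
  "{x,y} \<in> complete_graph_edges n \<longleftrightarrow> x < n \<and> y < n \<and> x \<noteq> y"
  by (auto simp: complete_graph_edges_def doubleton_eq_iff)

lemma spanning_tree_edgeD:
  "spanning_tree n T \<Longrightarrow> {p,q} \<in> T \<Longrightarrow> p < n \<and> q < n \<and> p \<noteq> q"
  unfolding spanning_tree_def using doubleton_in_complete_graph_edges by blast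

lemma connected_onI_common_vertex:
  "(\<And>u. u < n \<Longrightarrow> (adj F)\<^sup>*\<^sup>* u q) \<Longrightarrow> connected_on {0..<n} F"
  unfolding connected_on_def by (metis atLeastLessThan_iff reachable_sym rtranclp_trans)

lemma spanning_tree_delete_edge_reachable:
  assumes "spanning_tree n T" "{p,q} \<in> T" "u < n"
  shows "(adj (T - {{p,q}}))\<^sup>*\<^sup>* u p \<or> (adj (T - {{p,q}}))\<^sup>*\<^sup>* u q"
proof -
  have "(adj T)\<^sup>*\<^sup>* u q"
    using assms spanning_tree_edgeD[OF assms(1,2)] by (auto simp: spanning_tree_def connected_on_def)
  moreover have "T = insert {p,q} (T - {{p,q}})" using assms(2) by auto
  ultimately show ?thesis using reachable_insert_edge[of p q "T - {{p,q}}" u q] by auto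
qed

lemma spanning_tree_exchange_edge:
  assumes T: "spanning_tree n T" and pq: "{p,q} \<in> T" and x: "x < n"
    and sep: "\<not> (adj (T - {{p,q}}))\<^sup>*\<^sup>* x q"
  shows "spanning_tree n (insert {x,q} (T - {{p,q}}))"
proof -
  let ?F = "T - {{p,q}}"
  let ?G = "insert {x,q} ?F"
  have "x \<noteq> q" using sep by auto
  have "q < n" using spanning_tree_edgeD[OF T pq] by simp
  have sub: "?G \<subseteq> complete_graph_edges n"
    using T x \<open>q < n\<close> \<open>x \<noteq> q\<close> by (auto simp: spanning_tree_def doubleton_in_complete_graph_edges)
  have "acyclic_edges ?F" using T acyclic_edges_mono[of ?F T] by (auto simp: spanning_tree_def)
  then have acyc: "acyclic_edges ?G" using acyclic_insert_edge sep \<open>x \<noteq> q\<close> by blast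
  have FG: "(adj ?F)\<^sup>*\<^sup>* a b \<Longrightarrow> (adj ?G)\<^sup>*\<^sup>* a b" for a b
    by (rule reachable_mono[of ?F]) auto
  have "(adj ?F)\<^sup>*\<^sup>* x p" using spanning_tree_delete_edge_reachable[OF T pq x] sep by blast
  moreover have "adj ?G x q" using \<open>x \<noteq> q\<close> by (auto simp: adj_def)
  ultimately have pq_G: "(adj ?G)\<^sup>*\<^sup>* p q"
    using FG reachable_sym by (meson rtranclp.rtrancl_into_rtrancl)
  have "connected_on {0..<n} ?G"
  proof (rule connected_onI_common_vertex)
    fix u assume "u < n"
    then show "(adj ?G)\<^sup>*\<^sup>* u q"
      using spanning_tree_delete_edge_reachable[OF T pq] FG pq_G by (meson rtranclp_trans)
  qed
  then show ?thesis using sub acyc by (simp add: spanning_tree_def)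
qed

definition trees_avoiding :: "nat \<Rightarrow> nat set set \<Rightarrow> nat set set set" where
  "trees_avoiding n S = {T. spanning_tree n T \<and> T \<inter> S = {}}"

lemma finite_trees_avoiding: "finite (trees_avoiding n S)"
proof -
  have "complete_graph_edges n \<subseteq> Pow {0..<n}" by (auto simp: complete_graph_edges_def)
  then have "finite (complete_graph_edges n)" by (rule finite_subset) simp
  moreover have "trees_avoiding n S \<subseteq> Pow (complete_graph_edges n)"
    by (auto simp: trees_avoiding_def spanning_tree_def)
  ultimately show ?thesis by (simp add: finite_subset)
qed

(* x lies on the p-side of T - {p,q}; exchanging pq for xq is the bijection of the counting
   argument. *)
definition exchange_pairs :: "nat \<Rightarrow> nat set set \<Rightarrow> nat \<Rightarrow> nat \<Rightarrow> (nat set set \<times> nat) set" where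
  "exchange_pairs n S p q = {(T, x). T \<in> trees_avoiding n S \<and> {p,q} \<in> T \<and> x < n \<and> x \<noteq> p
     \<and> \<not> (adj (T - {{p,q}}))\<^sup>*\<^sup>* x q}"

lemma exchange_pairsD:
  assumes "(T, x) \<in> exchange_pairs n S p q"
  shows "(adj (T - {{p,q}}))\<^sup>*\<^sup>* x p" and "\<not> (adj (T - {{p,q}}))\<^sup>*\<^sup>* p q"
    and "{x,q} \<notin> T - {{p,q}}"
proof -
  have T: "spanning_tree n T" "{p,q} \<in> T" and "x < n"
    and sep: "\<not> (adj (T - {{p,q}}))\<^sup>*\<^sup>* x q"
    using assms by (auto simp: exchange_pairs_def trees_avoiding_def)
  show "(adj (T - {{p,q}}))\<^sup>*\<^sup>* x p"
    using spanning_tree_delete_edge_reachable[OF T \<open>x < n\<close>] sep by blast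
  have "acyclic_edges T" using T(1) by (simp add: spanning_tree_def)
  then show "\<not> (adj (T - {{p,q}}))\<^sup>*\<^sup>* p q"
    using acyclic_not_reachable_without_edge T(2) spanning_tree_edgeD[OF T] by blast
  show "{x,q} \<notin> T - {{p,q}}"
  proof
    assume "{x,q} \<in> T - {{p,q}}"
    moreover have "x \<noteq> q" using sep by auto
    ultimately have "adj (T - {{p,q}}) x q" by (simp add: adj_def)
    then show False using sep by (meson r_into_rtranclp)
  qed
qed

lemma exchange_pairs_into:
  assumes "(T, x) \<in> exchange_pairs n S p q" "\<forall>e\<in>S. q \<notin> e"
  shows "insert {x,q} (T - {{p,q}}) \<in> {T' \<in> trees_avoiding n S. {p,q} \<notin> T'}"
proof -
  have T: "spanning_tree n T" "T \<inter> S = {}" "{p,q} \<in> T" and x: "x < n" "x \<noteq> p"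
    and sep: "\<not> (adj (T - {{p,q}}))\<^sup>*\<^sup>* x q"
    using assms(1) by (auto simp: exchange_pairs_def trees_avoiding_def)
  have "spanning_tree n (insert {x,q} (T - {{p,q}}))"
    using spanning_tree_exchange_edge[OF T(1,3) x(1) sep] .
  moreover have "{p,q} \<noteq> {x,q}" using x(2) by (auto simp: doubleton_eq_iff)
  ultimately show ?thesis using T(2) assms(2) by (auto simp: trees_avoiding_def)
qed

(* Uniqueness of the last edge of the path from p to q, stated without acyclicity of F. *)
lemma exchange_endpoint_unique:
  assumes "{x1,q} \<in> F" "{x2,q} \<in> F"
    and "\<not> (adj (F - {{x1,q}}))\<^sup>*\<^sup>* p q" "\<not> (adj (F - {{x2,q}}))\<^sup>*\<^sup>* p q"
    and "(adj (F - {{x1,q}}))\<^sup>*\<^sup>* x1 p" "\<not> (adj (F - {{x1,q}}))\<^sup>*\<^sup>* x1 q"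
  shows "x1 = x2"
proof (rule ccontr)
  assume "x1 \<noteq> x2"
  define F0 where "F0 = F - {{x1,q},{x2,q}}"
  have ne: "{x1,q} \<noteq> {x2,q}" using \<open>x1 \<noteq> x2\<close> by (auto simp: doubleton_eq_iff)
  have F1: "F - {{x1,q}} = insert {x2,q} F0" using assms(2) ne by (auto simp: F0_def)
  have F0_1: "(adj F0)\<^sup>*\<^sup>* a b \<Longrightarrow> (adj (F - {{x1,q}}))\<^sup>*\<^sup>* a b" for a b
    by (rule reachable_mono[of F0]) (auto simp: F0_def)
  have F0_2: "(adj F0)\<^sup>*\<^sup>* a b \<Longrightarrow> (adj (F - {{x2,q}}))\<^sup>*\<^sup>* a b" for a b
    by (rule reachable_mono[of F0]) (auto simp: F0_def)
  have "adj (F - {{x2,q}}) x1 q" using assms(1,6) ne by (auto simp: adj_def)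
  then have "\<not> (adj F0)\<^sup>*\<^sup>* x1 p"
    using assms(4) F0_2 reachable_sym by (meson rtranclp.rtrancl_into_rtrancl)
  moreover have "(adj (insert {x2,q} F0))\<^sup>*\<^sup>* x1 p" using assms(5) F1 by simp
  ultimately have "(adj F0)\<^sup>*\<^sup>* x1 q \<or> (adj F0)\<^sup>*\<^sup>* q p"
    using reachable_insert_edge by blast
  then show False using assms(3,6) F0_1 reachable_sym by blast
qed

lemma exchange_pairs_inj:
  assumes P1: "(T1, x1) \<in> exchange_pairs n S p q" and P2: "(T2, x2) \<in> exchange_pairs n S p q"
    and eq: "insert {x1,q} (T1 - {{p,q}}) = insert {x2,q} (T2 - {{p,q}})"
  shows "T1 = T2 \<and> x1 = x2"
proof -
  define F where "F = insert {x1,q} (T1 - {{p,q}})"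
  have F1: "F - {{x1,q}} = T1 - {{p,q}}" using exchange_pairsD(3)[OF P1] by (auto simp: F_def)
  have F2: "F - {{x2,q}} = T2 - {{p,q}}" using exchange_pairsD(3)[OF P2] by (auto simp: F_def eq)
  have "x1 = x2"
  proof (rule exchange_endpoint_unique)
    show "{x1,q} \<in> F" by (simp add: F_def)
    show "{x2,q} \<in> F" by (simp add: F_def eq)
    show "\<not> (adj (F - {{x1,q}}))\<^sup>*\<^sup>* p q" "\<not> (adj (F - {{x2,q}}))\<^sup>*\<^sup>* p q"
      using exchange_pairsD(2)[OF P1] exchange_pairsD(2)[OF P2] F1 F2 by simp_all
    show "(adj (F - {{x1,q}}))\<^sup>*\<^sup>* x1 p" using exchange_pairsD(1)[OF P1] F1 by simp
    show "\<not> (adj (F - {{x1,q}}))\<^sup>*\<^sup>* x1 q" using P1 F1 by (simp add: exchange_pairs_def)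
  qed
  moreover have "{p,q} \<in> T1" "{p,q} \<in> T2" using P1 P2 by (simp_all add: exchange_pairs_def)
  ultimately show ?thesis using F1 F2 by (metis insert_Diff)
qed

lemma exchange_pairs_surj:
  assumes "T' \<in> trees_avoiding n S" "{p,q} \<notin> T'" "p < n" "q < n" "p \<noteq> q" "\<forall>e\<in>S. p \<notin> e"
  shows "T' \<in> (\<lambda>(T, x). insert {x,q} (T - {{p,q}})) ` exchange_pairs n S p q"
proof -
  have T': "spanning_tree n T'" "T' \<inter> S = {}" using assms(1) by (auto simp: trees_avoiding_def)
  have "(adj T')\<^sup>*\<^sup>* p q" using T'(1) assms(3,4) by (auto simp: spanning_tree_def connected_on_def)
  then obtain x where xq: "{x,q} \<in> T'" and "x \<noteq> p" and px: "(adj (T' - {{x,q}}))\<^sup>*\<^sup>* p x"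
    using assms(5,2) by (rule reachable_last_edge)
  have "x < n" "x \<noteq> q" using spanning_tree_edgeD[OF T'(1) xq] by auto
  have "acyclic_edges T'" using T'(1) by (simp add: spanning_tree_def)
  then have sep: "\<not> (adj (T' - {{x,q}}))\<^sup>*\<^sup>* x q"
    using acyclic_not_reachable_without_edge xq \<open>x \<noteq> q\<close> by blast
  then have "\<not> (adj (T' - {{x,q}}))\<^sup>*\<^sup>* p q" using px reachable_sym by (meson rtranclp_trans)
  then have tree: "spanning_tree n (insert {p,q} (T' - {{x,q}}))"
    by (rule spanning_tree_exchange_edge[OF T'(1) xq assms(3)])
  define T where "T = insert {p,q} (T' - {{x,q}})"
  have del: "T - {{p,q}} = T' - {{x,q}}" using assms(2) by (auto simp: T_def)
  have "(T, x) \<in> exchange_pairs n S p q"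
    using tree T'(2) assms(6) \<open>x < n\<close> \<open>x \<noteq> p\<close> sep del
    by (auto simp: exchange_pairs_def trees_avoiding_def T_def)
  moreover have "insert {x,q} (T - {{p,q}}) = T'" using del xq by auto
  ultimately show ?thesis by force
qed

lemma card_exchange_pairs:
  assumes "p < n" "q < n" "p \<noteq> q" "\<forall>e\<in>S. p \<notin> e \<and> q \<notin> e"
  shows "card (exchange_pairs n S p q) = card {T \<in> trees_avoiding n S. {p,q} \<notin> T}"
proof (rule bij_betw_same_card)
  let ?f = "\<lambda>(T, x). insert {x,q} (T - {{p,q}})"
  let ?Out = "{T \<in> trees_avoiding n S. {p,q} \<notin> T}"
  have "inj_on ?f (exchange_pairs n S p q)"
  proof (rule inj_onI)
    fix u v assume "u \<in> exchange_pairs n S p q" "v \<in> exchange_pairs n S p q" "?f u = ?f v"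
    moreover obtain T1 x1 T2 x2 where "u = (T1, x1)" "v = (T2, x2)" by fastforce
    ultimately show "u = v" using exchange_pairs_inj by simp
  qed
  moreover have "?f ` exchange_pairs n S p q = ?Out"
  proof
    show "?f ` exchange_pairs n S p q \<subseteq> ?Out"
    proof (rule image_subsetI)
      fix u assume "u \<in> exchange_pairs n S p q"
      moreover have "\<forall>e\<in>S. q \<notin> e" using assms(4) by blast
      ultimately show "?f u \<in> ?Out" using exchange_pairs_into by (cases u) simp
    qed
    show "?Out \<subseteq> ?f ` exchange_pairs n S p q"
    proof
      fix T assume "T \<in> ?Out"
      then show "T \<in> ?f ` exchange_pairs n S p q"
        using exchange_pairs_surj[of T n S p q] assms by simp
    qed
  qed
  ultimately show "bij_betw ?f (exchange_pairs n S p q) ?Out"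
    by (simp add: bij_betw_def)
qed

lemma exchange_pairs_partition:
  assumes "a < n" "b < n" "a \<noteq> b"
  shows "{T \<in> trees_avoiding n S. {a,b} \<in> T} \<times> ({0..<n} - {a,b})
      = exchange_pairs n S a b \<union> exchange_pairs n S b a"
    and "exchange_pairs n S a b \<inter> exchange_pairs n S b a = {}"
proof -
  have sides: "(adj (T - {{a,b}}))\<^sup>*\<^sup>* x a \<or> (adj (T - {{a,b}}))\<^sup>*\<^sup>* x b"
    and not_both: "\<not> ((adj (T - {{a,b}}))\<^sup>*\<^sup>* x a \<and> (adj (T - {{a,b}}))\<^sup>*\<^sup>* x b)"
    if "T \<in> trees_avoiding n S" "{a,b} \<in> T" "x < n" for T x
  proof -
    have T: "spanning_tree n T" using that(1) by (simp add: trees_avoiding_def)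
    then show "(adj (T - {{a,b}}))\<^sup>*\<^sup>* x a \<or> (adj (T - {{a,b}}))\<^sup>*\<^sup>* x b"
      using spanning_tree_delete_edge_reachable that(2,3) by blast
    have "\<not> (adj (T - {{a,b}}))\<^sup>*\<^sup>* a b"
      using T acyclic_not_reachable_without_edge that(2) assms(3) by (auto simp: spanning_tree_def)
    then show "\<not> ((adj (T - {{a,b}}))\<^sup>*\<^sup>* x a \<and> (adj (T - {{a,b}}))\<^sup>*\<^sup>* x b)"
      using reachable_sym rtranclp_trans by metis
  qed
  show "{T \<in> trees_avoiding n S. {a,b} \<in> T} \<times> ({0..<n} - {a,b})
      = exchange_pairs n S a b \<union> exchange_pairs n S b a"
    using sides not_both by (auto simp: exchange_pairs_def insert_commute)
  show "exchange_pairs n S a b \<inter> exchange_pairs n S b a = {}"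
    using sides by (auto simp: exchange_pairs_def insert_commute)
qed

lemma card_trees_avoiding_containing_edge:
  assumes "a < n" "b < n" "a \<noteq> b" "\<forall>e\<in>S. a \<notin> e \<and> b \<notin> e"
  shows "n * card {T \<in> trees_avoiding n S. {a,b} \<in> T} = 2 * card (trees_avoiding n S)"
proof -
  let ?In = "{T \<in> trees_avoiding n S. {a,b} \<in> T}"
  let ?Out = "{T \<in> trees_avoiding n S. {a,b} \<notin> T}"
  have "finite ?In" "finite ?Out" using finite_trees_avoiding by simp_all
  then have "card (?In \<union> ?Out) = card ?In + card ?Out" by (rule card_Un_disjoint) auto
  moreover have "?In \<union> ?Out = trees_avoiding n S" by auto
  ultimately have "card (trees_avoiding n S) = card ?In + card ?Out" by simp
  moreover have "card ?In * (n - 2) = 2 * card ?Out"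
  proof -
    have "card ({0..<n} - {a,b}) = n - 2"
      using assms(1-3) by (subst card_Diff_subset) auto
    then have "card ?In * (n - 2) = card (?In \<times> ({0..<n} - {a,b}))"
      by (simp add: card_cartesian_product)
    also have "\<dots> = card (exchange_pairs n S a b \<union> exchange_pairs n S b a)"
      using exchange_pairs_partition(1)[OF assms(1-3)] by simp
    also have "\<dots> = card (exchange_pairs n S a b) + card (exchange_pairs n S b a)"
    proof (rule card_Un_disjoint)
      have "finite (?In \<times> ({0..<n} - {a,b}))" using finite_trees_avoiding by simp
      then show "finite (exchange_pairs n S a b)" "finite (exchange_pairs n S b a)"
        unfolding exchange_pairs_partition(1)[OF assms(1-3)] by simp_all
      show "exchange_pairs n S a b \<inter> exchange_pairs n S b a = {}"
        using exchange_pairs_partition(2)[OF assms(1-3)] .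
    qed
    also have "\<dots> = 2 * card ?Out"
      using card_exchange_pairs[of a n b S] card_exchange_pairs[of b n a S] assms
      by (simp add: insert_commute)
    finally show ?thesis .
  qed
  moreover have "n \<ge> 2" using assms(1-3) by linarith
  then obtain k where "n = k + 2" by (metis le_add_diff_inverse2)
  ultimately show ?thesis by (simp add: algebra_simps)
qed

lemma measure_UST:
  assumes "spanning_trees n \<noteq> {}"
  shows "measure (measure_pmf (UST n)) X = card (spanning_trees n \<inter> X) / card (spanning_trees n)"
proof -
  have "spanning_trees n = trees_avoiding n {}"
    by (simp add: spanning_trees_def trees_avoiding_def)
  then have "finite (spanning_trees n)" using finite_trees_avoiding by simp
  then show ?thesis unfolding UST_def by (rule measure_pmf_of_set[OF assms])
qed

lemma measure_UST_edge_avoiding: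
  assumes "spanning_trees n \<noteq> {}" "a < n" "b < n" "a \<noteq> b" "\<forall>e\<in>S. a \<notin> e \<and> b \<notin> e"
  shows "measure (measure_pmf (UST n)) {T. {a,b} \<in> T \<and> T \<inter> S = {}}
    = 2 / n * measure (measure_pmf (UST n)) {T. T \<inter> S = {}}"
proof -
  have "spanning_trees n \<inter> {T. {a,b} \<in> T \<and> T \<inter> S = {}} = {T \<in> trees_avoiding n S. {a,b} \<in> T}"
    and "spanning_trees n \<inter> {T. T \<inter> S = {}} = trees_avoiding n S"
    by (auto simp: spanning_trees_def trees_avoiding_def)
  moreover have "real n * card {T \<in> trees_avoiding n S. {a,b} \<in> T} = 2 * card (trees_avoiding n S)"
    using card_trees_avoiding_containing_edge[OF assms(2-5)] by (metis of_nat_mult of_nat_numeral)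
  then have "real (card {T \<in> trees_avoiding n S. {a,b} \<in> T}) = 2 / n * card (trees_avoiding n S)"
    using assms(2) by (simp add: field_simps)
  ultimately show ?thesis using assms(1) by (simp add: measure_UST)
qed

lemma measure_UST_edge_indep_avoiding:
  assumes "spanning_trees n \<noteq> {}" "i \<in> complete_graph_edges n" "\<forall>e\<in>S. i \<inter> e = {}"
  shows "measure (measure_pmf (UST n)) ({T. i \<in> T} \<inter> {T. T \<inter> S = {}})
    = measure (measure_pmf (UST n)) {T. i \<in> T} * measure (measure_pmf (UST n)) {T. T \<inter> S = {}}"
proof -
  obtain a b where i: "i = {a,b}" and ab: "a < n" "b < n" "a \<noteq> b"
    using assms(2) by (auto simp: complete_graph_edges_def)
  have "\<forall>e\<in>S. a \<notin> e \<and> b \<notin> e" using assms(3) i by auto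
  then have "measure (measure_pmf (UST n)) ({T. i \<in> T} \<inter> {T. T \<inter> S = {}})
      = 2 / n * measure (measure_pmf (UST n)) {T. T \<inter> S = {}}"
    using measure_UST_edge_avoiding[OF assms(1) ab] i by (simp add: Int_def)
  moreover have "measure (measure_pmf (UST n)) {T. i \<in> T} = 2 / n"
    using measure_UST_edge_avoiding[OF assms(1) ab, of "{}"] i by simp
  ultimately show ?thesis by simp
qed

theorem corollary3p4:
  fixes n :: nat and T :: "nat set set"
  assumes "spanning_tree n T"
  shows "neg_dep_graph (measure_pmf (UST n)) T (\<lambda>e. {T'. e \<in> T'}) (line_graph T)"
proof -
  let ?P = "measure (measure_pmf (UST n))"
  have ne: "spanning_trees n \<noteq> {}" using assms by (auto simp: spanning_trees_def)
  have "?P ({T'. i \<in> T'} \<inter> {T'. T' \<inter> S = {}}) / ?P {T'. T' \<inter> S = {}} \<le> ?P {T'. i \<in> T'}"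
    if "i \<in> T" "S \<subseteq> {j \<in> T. \<not> line_graph T i j}" for i S
  proof (cases "i \<in> S")
    \<comment> \<open>possible, as \<open>line_graph T\<close> is irreflexive\<close>
    case True
    then have "{T'. i \<in> T'} \<inter> {T'. T' \<inter> S = {}} = {}" by auto
    then show ?thesis by simp
  next
    case False
    with that have "\<forall>e\<in>S. i \<inter> e = {}" by (auto simp: line_graph_def)
    moreover have "i \<in> complete_graph_edges n" using that(1) assms by (auto simp: spanning_tree_def)
    ultimately show ?thesis
      using measure_UST_edge_indep_avoiding[OF ne] by (cases "?P {T'. T' \<inter> S = {}} = 0") auto
  qed
  moreover have "space (measure_pmf (UST n)) \<inter> (\<Inter>j\<in>S. space (measure_pmf (UST n)) - {T'. j \<in> T'})
      = {T'. T' \<inter> S = {}}" for S :: "nat set set"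
    by auto
  ultimately show ?thesis by (auto simp: neg_dep_graph_def line_graph_def)
qed

end
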